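(* Let $p$ be a prime and $a,b$ positive integers. In the $(p^a,p^b)$-game there is a winning sequence of exactly $p^{b p^a}-1$ moves.
   Context: The $(n,m)$-game: $n$ counters at positions $1,\dots,n$ (vertices in cyclic order of a regular $n$-gon table), each showing an element of $\mathbb{Z}_m$; a configuration is a vector in $\mathbb{Z}_m^n$, initially arbitrary and unknown. Each turn the player chooses a move $y\in\mathbb{Z}_m^n$ added coordinatewise, then the table is rotated by an adversarially chosen $k\in\mathbb{Z}_n$, replacing $x$ by $x'$ with $x'_{i+k}=x_i$ (indices mod $n$). The player wins if at some moment (including initially) all counters show $0$. A strategy is a finite sequence of moves; it is winning if it forces the zero configuration at some time for every initial configuration and every choice of rotations. *)

theory Defs
  imports "HOL-Computational_Algebra.Primes"
begin

text \<open>Configurations of the (n,m)-game: vectors in Z_m^n, represented as functions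
  nat => nat with entries < m on positions 0..n-1 (positions 1..n of the paper,
  shifted) and 0 elsewhere (extensional).\<close>

definition valid_config :: "nat \<Rightarrow> nat \<Rightarrow> (nat \<Rightarrow> nat) \<Rightarrow> bool" where
  "valid_config n m x \<longleftrightarrow> (\<forall>i<n. x i < m) \<and> (\<forall>i. n \<le> i \<longrightarrow> x i = 0)"

definition add_move :: "nat \<Rightarrow> nat \<Rightarrow> (nat \<Rightarrow> nat) \<Rightarrow> (nat \<Rightarrow> nat) \<Rightarrow> (nat \<Rightarrow> nat)" where
  "add_move n m x y = (\<lambda>i. if i < n then (x i + y i) mod m else 0)"

definition rotate_config :: "nat \<Rightarrow> nat \<Rightarrow> (nat \<Rightarrow> nat) \<Rightarrow> (nat \<Rightarrow> nat)" where
  "rotate_config n k x = (\<lambda>j. if j < n then x ((j + n - k) mod n) else 0)"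

fun game_state :: "nat \<Rightarrow> nat \<Rightarrow> (nat \<Rightarrow> nat) list \<Rightarrow> (nat \<Rightarrow> nat) \<Rightarrow> (nat \<Rightarrow> nat) \<Rightarrow> nat \<Rightarrow> (nat \<Rightarrow> nat)" where
  "game_state n m ys ks x 0 = x"
| "game_state n m ys ks x (Suc t) =
     rotate_config n (ks t) (add_move n m (game_state n m ys ks x t) (ys ! t))"

definition winning :: "nat \<Rightarrow> nat \<Rightarrow> (nat \<Rightarrow> nat) list \<Rightarrow> bool" where
  "winning n m ys \<longleftrightarrow>
     (\<forall>y\<in>set ys. valid_config n m y) \<and>
     (\<forall>x ks. valid_config n m x \<longrightarrow> (\<forall>t. ks t < n) \<longrightarrow>
        (\<exists>t\<le>length ys. game_state n m ys ks x t = (\<lambda>_. 0)))"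

end

theory Submission
  imports Defs
begin

text \<open>Lift the game to integer vectors. A filtration
  \<open>p\<^sup>b\<int>\<^sup>n = L\<^sub>0 \<subseteq> L\<^sub>1 \<subseteq> \<dots> \<subseteq> L\<^sub>b\<^sub>n = \<int>\<^sup>n\<close> is built from powers of \<open>p\<close> and of the cyclic
  difference operator \<open>D u l = u l - u (l - 1)\<close>: since \<open>D\<^bsup>p\<^sup>a\<^esup>\<close> is divisible by \<open>p\<close>
  (the binomial coefficients of \<open>(1 - \<sigma>)\<^bsup>p\<^sup>a\<^esup>\<close> vanish mod \<open>p\<close> and \<open>\<sigma>\<^bsup>p\<^sup>a\<^esup> = 1\<close>),
  every quotient \<open>L\<^sub>i\<^sub>+\<^sub>1 / L\<^sub>i\<close> is cyclic of order \<open>p\<close>, and every rotation acts trivially on it.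
  A strategy \<open>S\<^sub>i\<close> driving \<open>L\<^sub>i\<close> into \<open>L\<^sub>0\<close> then gives
  \<open>S\<^sub>i\<^sub>+\<^sub>1 = S\<^sub>i g S\<^sub>i g \<dots> g S\<^sub>i\<close> (\<open>p\<close> copies of \<open>S\<^sub>i\<close>, \<open>g\<close> a generator of \<open>L\<^sub>i\<^sub>+\<^sub>1 / L\<^sub>i\<close>):
  the moves of \<open>S\<^sub>i\<close> and the rotations do not change the class mod \<open>L\<^sub>i\<close>, each \<open>g\<close>
  increases it by one, so after at most \<open>p - 1\<close> moves \<open>g\<close> the position lies in \<open>L\<^sub>i\<close>.
  This strategy has length \<open>p\<^sup>b\<^sup>n - 1\<close>, and reduced mod \<open>p\<^sup>b\<close> it wins the game.\<close>

definition rotate_int :: "nat \<Rightarrow> nat \<Rightarrow> (nat \<Rightarrow> int) \<Rightarrow> nat \<Rightarrow> int" where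
  "rotate_int n k u = (\<lambda>l. u ((l + n - k) mod n))"

fun int_game_state ::
  "nat \<Rightarrow> (nat \<Rightarrow> int) list \<Rightarrow> (nat \<Rightarrow> nat) \<Rightarrow> (nat \<Rightarrow> int) \<Rightarrow> nat \<Rightarrow> nat \<Rightarrow> int" where
  "int_game_state n ws ks u 0 = u"
| "int_game_state n ws ks u (Suc t) =
     rotate_int n (ks t) (\<lambda>l. int_game_state n ws ks u t l + (ws ! t) l)"

lemma int_game_state_append_prefix:
  "t \<le> length ws \<Longrightarrow> int_game_state n (ws @ vs) ks u t = int_game_state n ws ks u t"
  by (induction t) (auto simp: nth_append)

lemma int_game_state_append_suffix:
  "int_game_state n (ws @ vs) ks u (length ws + t) =
   int_game_state n vs (\<lambda>t. ks (length ws + t)) (int_game_state n ws ks u (length ws)) t"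
  by (induction t) (simp_all add: int_game_state_append_prefix nth_append)

fun join_copies :: "'a list \<Rightarrow> 'a \<Rightarrow> nat \<Rightarrow> 'a list" where
  "join_copies ws g 0 = ws"
| "join_copies ws g (Suc r) = ws @ g # join_copies ws g r"

lemma length_join_copies: "length (join_copies ws g r) = Suc r * length ws + r"
  by (induction r) auto

lemma set_join_copies: "set (join_copies ws g r) \<subseteq> set ws \<union> {g}"
  by (induction r) auto

text \<open>\<open>level i\<close> is the subgroup \<open>L\<^sub>i\<close> of \<open>\<int>\<^sup>n\<close>; the assumptions say that \<open>L\<^sub>i\<^sub>+\<^sub>1 / L\<^sub>i\<close> is
  cyclic, generated by \<open>gen i\<close> of order dividing \<open>p\<close>, with trivial action of the rotations.\<close>

locale cyclic_filtration =
  fixes n p N :: nat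
    and level :: "nat \<Rightarrow> (nat \<Rightarrow> int) \<Rightarrow> bool"
    and gen :: "nat \<Rightarrow> nat \<Rightarrow> int"
  assumes p_pos: "0 < p"
    and level_add: "level i u \<Longrightarrow> level i w \<Longrightarrow> level i (\<lambda>l. u l + w l)"
    and level_smult: "level i u \<Longrightarrow> level i (\<lambda>l. c * u l)"
    and level_Suc: "level i u \<Longrightarrow> level (Suc i) u"
    and level_rotate_diff:
      "i < N \<Longrightarrow> k < n \<Longrightarrow> level (Suc i) u \<Longrightarrow> level i (\<lambda>l. rotate_int n k u l - u l)"
    and level_Suc_decomp: "i < N \<Longrightarrow> level (Suc i) u \<Longrightarrow> \<exists>c. level i (\<lambda>l. u l - c * gen i l)"
    and level_gen: "i < N \<Longrightarrow> level (Suc i) (gen i)"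
    and level_p_gen: "i < N \<Longrightarrow> level i (\<lambda>l. int p * gen i l)"
begin

lemma level_zero: "i < N \<Longrightarrow> level i (\<lambda>_. 0)"
  using level_smult[OF level_p_gen, of i 0] by simp

lemma level_of_dvd_coeff:
  assumes "i < N" and "level i (\<lambda>l. u l - c * gen i l)" and "int p dvd c"
  shows "level i u"
proof -
  from \<open>int p dvd c\<close> obtain q where "c = int p * q" ..
  with level_add[OF assms(2) level_smult[OF level_p_gen[OF \<open>i < N\<close>], of q]]
  show ?thesis by (simp add: algebra_simps)
qed

lemma int_game_state_level_drift:
  assumes "i < N" and moves: "\<forall>w\<in>set ws. level i w" and ks: "\<forall>t. ks t < n"
    and u: "level (Suc i) u" and "t \<le> length ws"
  shows "level (Suc i) (int_game_state n ws ks u t)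
    \<and> level i (\<lambda>l. int_game_state n ws ks u t l - u l)"
  using \<open>t \<le> length ws\<close>
proof (induction t)
  case 0
  show ?case using u level_zero[OF \<open>i < N\<close>] by simp
next
  case (Suc t)
  define s where "s = int_game_state n ws ks u t"
  define w where "w = ws ! t"
  define s' where "s' = int_game_state n ws ks u (Suc t)"
  have s: "level (Suc i) s" "level i (\<lambda>l. s l - u l)"
    using Suc unfolding s_def by auto
  have w: "level i w" using moves Suc.prems unfolding w_def by auto
  have sw: "level (Suc i) (\<lambda>l. s l + w l)" using level_add[OF s(1) level_Suc[OF w]] .
  have d: "level i (\<lambda>l. s' l - (s l + w l))"
    using level_rotate_diff[OF \<open>i < N\<close> ks[rule_format] sw] by (simp add: s'_def s_def w_def)
  have "level (Suc i) (\<lambda>l. (s' l - (s l + w l)) + (s l + w l))"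
    using level_add[OF level_Suc[OF d] sw] .
  moreover have "level i (\<lambda>l. (s' l - (s l + w l)) + ((s l - u l) + w l))"
    using level_add[OF d level_add[OF s(2) w]] .
  ultimately show ?case unfolding s'_def by simp
qed

definition wins_from :: "nat \<Rightarrow> (nat \<Rightarrow> int) list \<Rightarrow> bool" where
  "wins_from i ws \<longleftrightarrow> (\<forall>u ks. (\<forall>t::nat. ks t < n) \<longrightarrow> level i u \<longrightarrow>
     (\<exists>t\<le>length ws. level 0 (int_game_state n ws ks u t)))"

lemma wins_from_append:
  assumes "wins_from i ws" shows "wins_from i (ws @ vs)"
  unfolding wins_from_def
proof (intro allI impI)
  fix u and ks :: "nat \<Rightarrow> nat" assume "\<forall>t. ks t < n" "level i u"
  with assms obtain t where "t \<le> length ws" "level 0 (int_game_state n ws ks u t)"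
    unfolding wins_from_def by blast
  then show "\<exists>t\<le>length (ws @ vs). level 0 (int_game_state n (ws @ vs) ks u t)"
    by (intro exI[of _ t]) (simp add: int_game_state_append_prefix)
qed

text \<open>The class of the position mod \<open>L\<^sub>i\<close> is \<open>c\<close> times the generator; each copy of \<open>gen i\<close>
  raises \<open>c\<close> by one, and \<open>r'\<close> more raises reach a multiple of \<open>p\<close>.\<close>

lemma join_copies_wins:
  assumes "i < N" and moves: "\<forall>w\<in>set ws. level i w" and wins: "wins_from i ws"
  shows "\<forall>t::nat. ks t < n \<Longrightarrow> level (Suc i) u \<Longrightarrow> level i (\<lambda>l. u l - c * gen i l) \<Longrightarrow>
    r' \<le> r \<Longrightarrow> int p dvd c + int r' \<Longrightarrow>
    \<exists>t\<le>length (join_copies ws (gen i) r). level 0 (int_game_state n (join_copies ws (gen i) r) ks u t)"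
proof (induction r arbitrary: u ks c r')
  case (0 u ks c r')
  then have "level i u" using level_of_dvd_coeff[OF \<open>i < N\<close>] by simp
  with 0 wins show ?case unfolding wins_from_def by simp
next
  case (Suc r u ks c r')
  show ?case
  proof (cases r')
    case 0
    then have "level i u" using Suc.prems level_of_dvd_coeff[OF \<open>i < N\<close>] by simp
    have "wins_from i (join_copies ws (gen i) (Suc r))"
      using wins_from_append[OF wins, of "gen i # join_copies ws (gen i) r"] by simp
    with \<open>level i u\<close> Suc.prems(1) show ?thesis unfolding wins_from_def by blast
  next
    case (Suc r'')
    define g where "g = gen i"
    define e where "e = int_game_state n ws ks u (length ws)"
    define s' where "s' = int_game_state n (ws @ [g]) ks u (length (ws @ [g]))"
    have e: "level (Suc i) e" "level i (\<lambda>l. e l - u l)"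
      using int_game_state_level_drift[OF \<open>i < N\<close> moves] Suc.prems(1,2) unfolding e_def by auto
    have s'_eq: "s' = rotate_int n (ks (length ws)) (\<lambda>l. e l + g l)"
      using int_game_state_append_prefix[of "length ws" ws n "[g]" ks u]
      unfolding s'_def e_def by simp
    have eg: "level (Suc i) (\<lambda>l. e l + g l)"
      using level_add[OF e(1) level_gen[OF \<open>i < N\<close>]] unfolding g_def .
    have d: "level i (\<lambda>l. s' l - (e l + g l))"
      using level_rotate_diff[OF \<open>i < N\<close> Suc.prems(1)[rule_format] eg] s'_eq by simp
    have s': "level (Suc i) s'"
      using level_add[OF level_Suc[OF d] eg] by simp
    have "level i (\<lambda>l. (s' l - (e l + g l)) + ((e l - u l) + (u l - c * g l)))"
      using level_add[OF d level_add[OF e(2) Suc.prems(3)[folded g_def]]] .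
    then have c': "level i (\<lambda>l. s' l - (c + 1) * gen i l)"
      by (simp add: algebra_simps g_def)
    define ks' where "ks' = (\<lambda>t. ks (length (ws @ [g]) + t))"
    have "\<forall>t. ks' t < n" "r'' \<le> r" "int p dvd (c + 1) + int r''"
      using Suc.prems(1,4,5) \<open>r' = Suc r''\<close> by (auto simp: ks'_def algebra_simps)
    then obtain t where t: "t \<le> length (join_copies ws g r)"
        "level 0 (int_game_state n (join_copies ws g r) ks' s' t)"
      using Suc.IH[OF _ s' c'] unfolding g_def by blast
    have "join_copies ws g (Suc r) = (ws @ [g]) @ join_copies ws g r" by simp
    then have "int_game_state n (join_copies ws g (Suc r)) ks u (length (ws @ [g]) + t) =
        int_game_state n (join_copies ws g r) ks' s' t"
      unfolding s'_def ks'_def by (simp only: int_game_state_append_suffix)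
    then have "level 0 (int_game_state n (join_copies ws g (Suc r)) ks u (length (ws @ [g]) + t))"
      using t(2) by (simp only:)
    moreover have "length (ws @ [g]) + t \<le> length (join_copies ws g (Suc r))"
      using t(1) by (simp add: length_join_copies)
    ultimately have "\<exists>t'\<le>length (join_copies ws g (Suc r)).
        level 0 (int_game_state n (join_copies ws g (Suc r)) ks u t')"
      by (intro exI[of _ "length (ws @ [g]) + t"] conjI)
    then show ?thesis by (simp only: g_def)
  qed
qed

fun strategy :: "nat \<Rightarrow> (nat \<Rightarrow> int) list" where
  "strategy 0 = []"
| "strategy (Suc i) = join_copies (strategy i) (gen i) (p - 1)"

lemma length_strategy: "length (strategy i) = p ^ i - 1"
proof (induction i)
  case (Suc i)
  have "p ^ i \<noteq> 0" using p_pos by simp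
  then obtain q where q: "p ^ i = Suc q" using not0_implies_Suc by blast
  have "length (strategy (Suc i)) = p * length (strategy i) + (p - 1)"
    using p_pos by (simp add: length_join_copies)
  also have "\<dots> = p ^ Suc i - 1" using Suc.IH q p_pos by simp
  finally show ?case .
qed simp

lemma strategy_wins:
  "i \<le> N \<Longrightarrow> (\<forall>w\<in>set (strategy i). level i w) \<and> wins_from i (strategy i)"
proof (induction i)
  case 0
  show ?case unfolding wins_from_def by force
next
  case (Suc i)
  then have "i < N" by simp
  have moves: "\<forall>w\<in>set (strategy i). level i w" and wins: "wins_from i (strategy i)"
    using Suc by auto
  have "wins_from (Suc i) (strategy (Suc i))"
    unfolding wins_from_def
  proof (intro allI impI)
    fix u and ks :: "nat \<Rightarrow> nat" assume ks: "\<forall>t. ks t < n" and u: "level (Suc i) u"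
    obtain c where c: "level i (\<lambda>l. u l - c * gen i l)"
      using level_Suc_decomp[OF \<open>i < N\<close> u] by blast
    define r where "r = (- c) mod int p"
    have "0 \<le> r" "r < int p" using p_pos unfolding r_def by simp_all
    then have "nat r \<le> p - 1" by linarith
    moreover have "int p dvd c + int (nat r)"
      using mod_add_right_eq[of c "- c" "int p"] \<open>0 \<le> r\<close> unfolding r_def
      by (simp add: mod_0_imp_dvd)
    ultimately show "\<exists>t\<le>length (strategy (Suc i)). level 0 (int_game_state n (strategy (Suc i)) ks u t)"
      using join_copies_wins[OF \<open>i < N\<close> moves wins ks u c] by simp
  qed
  moreover have "\<forall>w\<in>set (strategy (Suc i)). level (Suc i) w"
    using set_join_copies[of "strategy i" "gen i" "p - 1"] moves level_Suc level_gen[OF \<open>i < N\<close>]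
    by auto
  ultimately show ?case by blast
qed

end

definition cyc_diff :: "nat \<Rightarrow> (nat \<Rightarrow> int) \<Rightarrow> nat \<Rightarrow> int" where
  "cyc_diff n u = (\<lambda>l. u l - u ((l + n - 1) mod n))"

definition delta0 :: "nat \<Rightarrow> int" where
  "delta0 = (\<lambda>l. if l = 0 then 1 else 0)"

lemma cyc_diff_pow_diff_smult:
  "(cyc_diff n ^^ j) (\<lambda>l. u l - c * v l) = (\<lambda>l. (cyc_diff n ^^ j) u l - c * (cyc_diff n ^^ j) v l)"
  by (induction j) (auto simp: cyc_diff_def algebra_simps)

lemma cyc_diff_pow_add:
  "(cyc_diff n ^^ j) (\<lambda>l. u l + v l) = (\<lambda>l. (cyc_diff n ^^ j) u l + (cyc_diff n ^^ j) v l)"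
  using cyc_diff_pow_diff_smult[where c = "-1"] by simp

lemma cyc_diff_pow_smult:
  "(cyc_diff n ^^ j) (\<lambda>l. c * v l) = (\<lambda>l. c * (cyc_diff n ^^ j) v l)"
  by (induction j) (auto simp: cyc_diff_def algebra_simps)

lemma cyc_diff_dvd: "\<forall>l<n. d dvd u l \<Longrightarrow> l < n \<Longrightarrow> d dvd cyc_diff n u l"
  unfolding cyc_diff_def by (simp add: dvd_diff)

lemma cyc_diff_pow_dvd: "\<forall>l<n. d dvd u l \<Longrightarrow> l < n \<Longrightarrow> d dvd (cyc_diff n ^^ j) u l"
  by (induction j arbitrary: l) (simp_all add: cyc_diff_dvd)

lemma mod_add_diff_left:
  fixes x n k :: nat
  assumes "k \<le> n" shows "(x mod n + n - k) mod n = (x + n - k) mod n"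
proof -
  have "x mod n + n - k = x mod n + (n - k)" "x + n - k = x + (n - k)" using assms by auto
  then show ?thesis by (simp add: mod_add_left_eq)
qed

lemma cyc_diff_rotate_int:
  assumes "k < n" shows "cyc_diff n (rotate_int n k u) = rotate_int n k (cyc_diff n u)"
proof -
  have "((l + n - 1) mod n + n - k) mod n = ((l + n - k) mod n + n - 1) mod n" for l
  proof -
    have "l + n - 1 + n - k = l + n - k + n - 1" using assms by simp
    then show ?thesis using assms by (simp add: mod_add_diff_left)
  qed
  then show ?thesis by (simp add: cyc_diff_def rotate_int_def)
qed

lemma cyc_diff_pow_rotate_int:
  "k < n \<Longrightarrow> (cyc_diff n ^^ j) (rotate_int n k u) = rotate_int n k ((cyc_diff n ^^ j) u)"
  by (induction j) (simp_all add: cyc_diff_rotate_int)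

lemma alternating_binomial_sum_Suc:
  fixes f :: "nat \<Rightarrow> int"
  shows "(\<Sum>k\<le>j. (-1)^k * int (j choose k) * f k) - (\<Sum>k\<le>j. (-1)^k * int (j choose k) * f (Suc k))
       = (\<Sum>k\<le>Suc j. (-1)^k * int (Suc j choose k) * f k)"
proof -
  have "(\<Sum>k\<le>j. (-1)^k * int (j choose k) * f k) = (\<Sum>k\<le>Suc j. (-1)^k * int (j choose k) * f k)"
    by simp
  also have "\<dots> = f 0 + (\<Sum>k\<le>j. (-1)^Suc k * int (j choose Suc k) * f (Suc k))"
    by (subst sum.atMost_Suc_shift) simp
  finally have shift: "(\<Sum>k\<le>j. (-1)^k * int (j choose k) * f k)
      = f 0 + (\<Sum>k\<le>j. (-1)^Suc k * int (j choose Suc k) * f (Suc k))" .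
  have pascal: "(\<Sum>k\<le>Suc j. (-1)^k * int (Suc j choose k) * f k) =
     f 0 + (\<Sum>k\<le>j. (-1)^Suc k * int (j choose k) * f (Suc k))
         + (\<Sum>k\<le>j. (-1)^Suc k * int (j choose Suc k) * f (Suc k))"
    by (subst sum.atMost_Suc_shift) (simp add: sum.distrib[symmetric] algebra_simps)
  show ?thesis unfolding shift pascal by (simp add: sum_negf)
qed

lemma cyc_diff_pow_eq_sum:
  "j \<le> n \<Longrightarrow> l < n \<Longrightarrow>
    (cyc_diff n ^^ j) u l = (\<Sum>k\<le>j. (-1)^k * int (j choose k) * u ((l + n - k) mod n))"
proof (induction j arbitrary: l)
  case (Suc j)
  define l' where "l' = (l + n - 1) mod n"
  have "l' < n" using Suc.prems unfolding l'_def by simp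
  have shift: "(l' + n - k) mod n = (l + n - Suc k) mod n" if "k \<le> j" for k
  proof -
    have "(l' + n - k) mod n = (l + n - 1 + n - k) mod n"
      using that Suc.prems unfolding l'_def by (simp add: mod_add_diff_left)
    also have "l + n - 1 + n - k = (l + n - Suc k) + n" using that Suc.prems by simp
    finally show ?thesis by simp
  qed
  have "(cyc_diff n ^^ Suc j) u l = (cyc_diff n ^^ j) u l - (cyc_diff n ^^ j) u l'"
    by (simp add: cyc_diff_def l'_def)
  also have "\<dots> = (\<Sum>k\<le>j. (-1)^k * int (j choose k) * u ((l + n - k) mod n))
       - (\<Sum>k\<le>j. (-1)^k * int (j choose k) * u ((l + n - Suc k) mod n))"
    using Suc.IH[of l] Suc.IH[of l'] Suc.prems \<open>l' < n\<close> shift by simp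
  also have "\<dots> = (\<Sum>k\<le>Suc j. (-1)^k * int (Suc j choose k) * u ((l + n - k) mod n))"
    using alternating_binomial_sum_Suc[of j "\<lambda>k. u ((l + n - k) mod n)"] by simp
  finally show ?case .
qed simp

lemma prime_dvd_choose_prime_power:
  assumes "prime p" and "0 < k" "k < p ^ a"
  shows "p dvd (p ^ a choose k)"
proof (rule ccontr)
  assume "\<not> p dvd (p ^ a choose k)"
  then have "coprime (p ^ a) (p ^ a choose k)"
    using \<open>prime p\<close> by (simp add: prime_imp_coprime)
  moreover have "p ^ a dvd k * (p ^ a choose k)"
    using times_binomial_minus1_eq[OF \<open>0 < k\<close>, of "p ^ a"] by simp
  ultimately have "p ^ a dvd k" using coprime_dvd_mult_left_iff by blast
  with assms(2,3) show False by (simp add: nat_dvd_not_less)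
qed

lemma prime_dvd_one_plus_minus_one_power:
  assumes "prime p" and "0 < a"
  shows "int p dvd 1 + (-1) ^ (p ^ a)"
proof (cases "p = 2")
  case False
  then have "odd p" using assms(1) prime_odd_nat prime_ge_2_nat[OF assms(1)] by fastforce
  then show ?thesis by simp
qed (use assms(2) in simp)

text \<open>Modulo \<open>p\<close>, \<open>(1 - \<sigma>)\<^bsup>p\<^sup>a\<^esup> \<equiv> 1 + (-\<sigma>)\<^bsup>p\<^sup>a\<^esup> = 1 + (-1)\<^bsup>p\<^sup>a\<^esup>\<close>, which is itself
  divisible by \<open>p\<close>.\<close>

lemma cyc_diff_prime_power_dvd:
  assumes "prime p" and "0 < a" and n: "n = p ^ a"
    and u: "\<forall>l<n. int p ^ e dvd u l" and "l < n"
  shows "int p ^ Suc e dvd (cyc_diff n ^^ n) u l"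
proof -
  let ?h = "\<lambda>k. (-1)^k * int (n choose k) * u ((l + n - k) mod n)"
  have split: "{..n} = insert 0 (insert n {1..<n})" using \<open>l < n\<close> by auto
  have "(cyc_diff n ^^ n) u l = sum ?h {..n}"
    using cyc_diff_pow_eq_sum[of n n l u] \<open>l < n\<close> by simp
  also have "\<dots> = (1 + (-1)^n) * u l + sum ?h {1..<n}"
    unfolding split using \<open>l < n\<close> by (simp add: algebra_simps)
  finally have eq: "(cyc_diff n ^^ n) u l = (1 + (-1)^n) * u l + sum ?h {1..<n}" .
  have "int p ^ Suc e dvd (1 + (-1)^n) * u l"
    using mult_dvd_mono[OF prime_dvd_one_plus_minus_one_power[OF assms(1,2)] u[rule_format, OF \<open>l < n\<close>]] n
    by simp
  moreover have "int p ^ Suc e dvd sum ?h {1..<n}"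
  proof (rule dvd_sum)
    fix k assume k: "k \<in> {1..<n}"
    have "int p dvd int (n choose k)"
      using prime_dvd_choose_prime_power[OF assms(1), of k a] k n by auto
    moreover have "int p ^ e dvd u ((l + n - k) mod n)" using u \<open>l < n\<close> by simp
    ultimately show "int p ^ Suc e dvd ?h k" by (simp add: mult_dvd_mono mult.assoc)
  qed
  ultimately show ?thesis unfolding eq by simp
qed

lemma dvd_diff_of_dvd_cyc_diff:
  assumes h: "\<forall>l<n. d dvd cyc_diff n w l" and "l < n" "l' < n"
  shows "d dvd w l - w l'"
proof -
  have from0: "d dvd w l - w 0" if "l < n" for l
    using that
  proof (induction l)
    case (Suc l)
    have "d dvd w (Suc l) - w l"
      using h[rule_format, OF Suc.prems] Suc.prems by (simp add: cyc_diff_def)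
    with Suc show ?case using dvd_add[of d "w (Suc l) - w l" "w l - w 0"] by simp
  qed simp
  show ?thesis using dvd_diff[OF from0[OF \<open>l < n\<close>] from0[OF \<open>l' < n\<close>]] by simp
qed

lemma cyc_diff_pow_delta0_last:
  assumes "0 < n" shows "(cyc_diff n ^^ (n - 1)) delta0 (n - 1) = (-1) ^ (n - 1)"
proof -
  have summand: "(-1)^k * int ((n - 1) choose k) * delta0 ((n - 1 + n - k) mod n)
      = (if k = n - 1 then (-1) ^ (n - 1) else 0)" if "k \<le> n - 1" for k
  proof -
    have "n - 1 + n - k = (n - 1 - k) + n" using that assms by arith
    then have "(n - 1 + n - k) mod n = n - 1 - k" using assms by (simp only: mod_add_self2) simp
    moreover have "n - 1 - k = 0 \<longleftrightarrow> k = n - 1" using that by arith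
    ultimately show ?thesis by (simp add: delta0_def)
  qed
  have "(cyc_diff n ^^ (n - 1)) delta0 (n - 1)
      = (\<Sum>k\<le>n - 1. (-1)^k * int ((n - 1) choose k) * delta0 ((n - 1 + n - k) mod n))"
    using cyc_diff_pow_eq_sum[of "n - 1" n "n - 1" delta0] assms by simp
  also have "\<dots> = (\<Sum>k\<le>n - 1. if k = n - 1 then (-1) ^ (n - 1) else 0)"
    using summand by (intro sum.cong) simp_all
  finally show ?thesis by simp
qed

lemma prime_dvd_cyc_diff_pow_delta0:
  assumes "prime p" and "0 < a" and n: "n = p ^ a"
  shows "\<forall>l<n. int p dvd cyc_diff n ((cyc_diff n ^^ (n - 1)) delta0) l"
proof -
  have "n \<noteq> 0" using n prime_gt_0_nat[OF \<open>prime p\<close>] by simp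
  then obtain m where "n = Suc m" using not0_implies_Suc by blast
  then have "(cyc_diff n ^^ n) delta0 = cyc_diff n ((cyc_diff n ^^ (n - 1)) delta0)" by simp
  moreover have "\<forall>l<n. int p ^ 0 dvd delta0 l" by simp
  then have "\<forall>l<n. int p ^ Suc 0 dvd (cyc_diff n ^^ n) delta0 l"
    using cyc_diff_prime_power_dvd[OF assms] by blast
  ultimately show ?thesis by simp
qed

text \<open>The vector \<open>p\<^sup>e D\<^sup>n\<^sup>-\<^sup>1 \<delta>\<^sub>0\<close> is killed by \<open>D\<close> modulo \<open>p\<^sup>e\<^sup>+\<^sup>1\<close> and \<open>D\<^sup>n\<^sup>-\<^sup>1 \<delta>\<^sub>0\<close> has the unit
  entry \<open>\<plusminus>1\<close> at \<open>n - 1\<close>; subtracting a suitable multiple of it from \<open>w\<close> leaves a vector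
  vanishing at \<open>n - 1\<close> whose consecutive differences, hence all entries, are divisible
  by \<open>p\<^sup>e\<^sup>+\<^sup>1\<close>.\<close>

lemma cyc_diff_kernel_mod_prime_power:
  assumes "prime p" and "0 < a" and n: "n = p ^ a"
    and w: "\<forall>l<n. int p ^ e dvd w l" and Dw: "\<forall>l<n. int p ^ Suc e dvd cyc_diff n w l"
  shows "\<exists>c. \<forall>l<n. int p ^ Suc e dvd w l - c * (int p ^ e * (cyc_diff n ^^ (n - 1)) delta0 l)"
proof -
  have "0 < n" using n prime_gt_0_nat[OF \<open>prime p\<close>] by simp
  define G where "G = (cyc_diff n ^^ (n - 1)) delta0"
  have DG: "\<forall>l<n. int p dvd cyc_diff n G l"
    using prime_dvd_cyc_diff_pow_delta0[OF assms(1-3)] unfolding G_def .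
  have G_unit: "G (n - 1) * G (n - 1) = 1"
    using cyc_diff_pow_delta0_last[OF \<open>0 < n\<close>] unfolding G_def by (simp flip: power_add)
  have "n - 1 < n" using \<open>0 < n\<close> by simp
  then obtain q where q: "w (n - 1) = int p ^ e * q" using w by (auto elim: dvdE)
  define c where "c = q * G (n - 1)"
  define y where "y = (\<lambda>l. w l - c * (int p ^ e * G l))"
  have Dy: "\<forall>l<n. int p ^ Suc e dvd cyc_diff n y l"
  proof (intro allI impI)
    fix l assume "l < n"
    obtain t where "cyc_diff n G l = int p * t" using DG \<open>l < n\<close> by (auto elim: dvdE)
    then have "int p ^ Suc e dvd c * (int p ^ e * cyc_diff n G l)" by (simp add: algebra_simps)
    then have "int p ^ Suc e dvd cyc_diff n w l - c * (int p ^ e * cyc_diff n G l)"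
      using Dw \<open>l < n\<close> by (simp add: dvd_diff)
    then show "int p ^ Suc e dvd cyc_diff n y l" by (simp add: y_def cyc_diff_def algebra_simps)
  qed
  have "y (n - 1) = 0"
    using G_unit unfolding y_def c_def q by (simp add: algebra_simps)
  then have "\<forall>l<n. int p ^ Suc e dvd y l"
    using dvd_diff_of_dvd_cyc_diff[OF Dy _ \<open>n - 1 < n\<close>] by simp
  then show ?thesis unfolding y_def G_def by blast
qed

text \<open>With \<open>i = s n + j\<close>, \<open>j < n\<close>, level \<open>i\<close> consists of the \<open>u\<close> with \<open>p\<^bsup>b-s-1\<^esup> | u\<close>
  and \<open>p\<^bsup>b-s\<^esup> | D\<^sup>j u\<close>; its generator over level \<open>i\<close> is \<open>p\<^bsup>b-s-1\<^esup> D\<^bsup>n-1-j\<^esup> \<delta>\<^sub>0\<close>.\<close>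

definition diff_level :: "nat \<Rightarrow> nat \<Rightarrow> nat \<Rightarrow> nat \<Rightarrow> (nat \<Rightarrow> int) \<Rightarrow> bool" where
  "diff_level n p b i u \<longleftrightarrow> (\<forall>l<n. int p ^ (b - i div n - 1) dvd u l) \<and>
      (\<forall>l<n. int p ^ (b - i div n) dvd (cyc_diff n ^^ (i mod n)) u l)"

definition diff_level_gen :: "nat \<Rightarrow> nat \<Rightarrow> nat \<Rightarrow> nat \<Rightarrow> nat \<Rightarrow> int" where
  "diff_level_gen n p b i =
     (\<lambda>l. int p ^ (b - i div n - 1) * (cyc_diff n ^^ (n - 1 - i mod n)) delta0 l)"

lemma diff_level_0_iff: "diff_level n p b 0 u \<longleftrightarrow> (\<forall>l<n. int p ^ b dvd u l)"
proof -
  have weaken: "int p ^ (b - 1) dvd x" if "int p ^ b dvd x" for x :: int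
    using dvd_trans[OF le_imp_power_dvd that] by simp
  then show ?thesis unfolding diff_level_def by auto
qed

lemma diff_level_top: "0 < n \<Longrightarrow> diff_level n p b (b * n) u"
  by (simp add: diff_level_def)

lemma diff_level_add:
  "diff_level n p b i u \<Longrightarrow> diff_level n p b i w \<Longrightarrow> diff_level n p b i (\<lambda>l. u l + w l)"
  unfolding diff_level_def cyc_diff_pow_add by (auto intro: dvd_add)

lemma diff_level_smult: "diff_level n p b i u \<Longrightarrow> diff_level n p b i (\<lambda>l. c * u l)"
  unfolding diff_level_def cyc_diff_pow_smult by (auto intro: dvd_mult)

lemma diff_level_Suc:
  assumes "0 < n" and u: "diff_level n p b i u"
  shows "diff_level n p b (Suc i) u"
proof (cases "Suc (i mod n) = n")
  case True
  then have dm: "Suc i div n = Suc (i div n)" "Suc i mod n = 0" by (simp_all add: div_Suc mod_Suc)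
  have pd: "int p ^ (b - Suc (i div n) - 1) dvd int p ^ (b - i div n - 1)"
    by (rule le_imp_power_dvd) simp
  show ?thesis unfolding diff_level_def dm
  proof (intro conjI allI impI)
    fix l assume "l < n"
    then have "int p ^ (b - i div n - 1) dvd u l" using u by (simp add: diff_level_def)
    then show "int p ^ (b - Suc (i div n) - 1) dvd u l" "int p ^ (b - Suc (i div n)) dvd (cyc_diff n ^^ 0) u l"
      using dvd_trans[OF pd] by simp_all
  qed
next
  case False
  then have "Suc i div n = i div n" "Suc i mod n = Suc (i mod n)" by (simp_all add: div_Suc mod_Suc)
  then show ?thesis using u cyc_diff_dvd[of n "int p ^ (b - i div n)" "(cyc_diff n ^^ (i mod n)) u"]
    by (simp add: diff_level_def)
qed

lemma cyc_diff_pow_diff_level_gen: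
  assumes "0 < n"
  shows "(cyc_diff n ^^ (i mod n)) (diff_level_gen n p b i)
     = (\<lambda>l. int p ^ (b - i div n - 1) * (cyc_diff n ^^ (n - 1)) delta0 l)"
proof -
  have "(cyc_diff n ^^ (i mod n)) ((cyc_diff n ^^ (n - 1 - i mod n)) delta0)
      = (cyc_diff n ^^ (i mod n + (n - 1 - i mod n))) delta0"
    by (simp add: funpow_add)
  also have "i mod n + (n - 1 - i mod n) = n - 1"
    using mod_less_divisor[OF assms, of i] by simp
  finally show ?thesis unfolding diff_level_gen_def cyc_diff_pow_smult by simp
qed

lemma Suc_diff_div_pred: "i < b * n \<Longrightarrow> b - i div n = Suc (b - i div n - 1)"
  using less_mult_imp_div_less[of i b n] by simp

lemma diff_level_p_gen:
  assumes "0 < n" and "i < b * n"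
  shows "diff_level n p b i (\<lambda>l. int p * diff_level_gen n p b i l)"
proof -
  define e where "e = b - i div n - 1"
  have be: "b - i div n = Suc e" using Suc_diff_div_pred[OF assms(2)] unfolding e_def .
  have "(cyc_diff n ^^ (i mod n)) (\<lambda>l. int p * diff_level_gen n p b i l)
      = (\<lambda>l. int p * (int p ^ e * (cyc_diff n ^^ (n - 1)) delta0 l))"
    unfolding cyc_diff_pow_smult cyc_diff_pow_diff_level_gen[OF assms(1)] e_def ..
  then show ?thesis
    unfolding diff_level_def diff_level_gen_def e_def[symmetric] be by (simp add: power_Suc)
qed

locale prime_power_table =
  fixes p a b n :: nat
  assumes prime: "prime p" and a_pos: "0 < a" and n_def: "n = p ^ a"
begin

lemma n_pos: "0 < n"
  using n_def prime_gt_0_nat[OF prime] by simp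

lemma diff_level_Suc_iff:
  assumes "i < b * n"
  shows "diff_level n p b (Suc i) u \<longleftrightarrow> (\<forall>l<n. int p ^ (b - i div n - 1) dvd u l) \<and>
      (\<forall>l<n. int p ^ (b - i div n) dvd (cyc_diff n ^^ Suc (i mod n)) u l)"
proof (cases "Suc (i mod n) = n")
  case True
  define s where "s = i div n"
  have dm: "Suc i div n = Suc s" "Suc i mod n = 0"
    using True by (simp_all add: s_def div_Suc mod_Suc)
  have pd: "int p ^ (b - Suc s - 1) dvd int p ^ (b - s - 1)"
    by (rule le_imp_power_dvd) simp
  have "b - s = Suc (b - s - 1)" using Suc_diff_div_pred[OF assms] unfolding s_def .
  then have Dn: "\<forall>l<n. int p ^ (b - s) dvd (cyc_diff n ^^ n) u l"
    if "\<forall>l<n. int p ^ (b - s - 1) dvd u l"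
    using cyc_diff_prime_power_dvd[OF prime a_pos n_def that] by simp
  have "diff_level n p b (Suc i) u \<longleftrightarrow> (\<forall>l<n. int p ^ (b - s - 1) dvd u l)"
    unfolding diff_level_def dm using dvd_trans[OF pd] by auto
  then show ?thesis unfolding True s_def[symmetric] using Dn by blast
next
  case False
  then show ?thesis by (simp add: diff_level_def div_Suc mod_Suc)
qed

lemma diff_level_rotate_diff:
  assumes "i < b * n" and "k < n" and u: "diff_level n p b (Suc i) u"
  shows "diff_level n p b i (\<lambda>l. rotate_int n k u l - u l)"
proof -
  define w where "w = (cyc_diff n ^^ (i mod n)) u"
  have u_dvd: "\<forall>l<n. int p ^ (b - i div n - 1) dvd u l"
    and Dw: "\<forall>l<n. int p ^ (b - i div n) dvd cyc_diff n w l"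
    using u diff_level_Suc_iff[OF assms(1)] unfolding w_def by auto
  have idx: "(l + n - k) mod n < n" for l using n_pos by simp
  have D_rot: "(cyc_diff n ^^ (i mod n)) (\<lambda>l. rotate_int n k u l - u l)
      = (\<lambda>l. rotate_int n k w l - w l)"
    using cyc_diff_pow_diff_smult[where n = n and j = "i mod n" and u = "rotate_int n k u"
        and c = 1 and v = u]
      cyc_diff_pow_rotate_int[OF \<open>k < n\<close>, of "i mod n" u]
    unfolding w_def by simp
  have "\<forall>l<n. int p ^ (b - i div n - 1) dvd rotate_int n k u l - u l"
    using u_dvd idx by (simp add: rotate_int_def dvd_diff)
  moreover have "\<forall>l<n. int p ^ (b - i div n) dvd rotate_int n k w l - w l"
    using dvd_diff_of_dvd_cyc_diff[OF Dw] idx by (simp add: rotate_int_def)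
  ultimately show ?thesis unfolding diff_level_def D_rot by blast
qed

lemma diff_level_gen_mem:
  assumes "i < b * n" shows "diff_level n p b (Suc i) (diff_level_gen n p b i)"
proof -
  define e where "e = b - i div n - 1"
  define G where "G = (cyc_diff n ^^ (n - 1)) delta0"
  have be: "b - i div n = Suc e"
    using Suc_diff_div_pred[OF assms(1)] unfolding e_def .
  have "(cyc_diff n ^^ Suc (i mod n)) (diff_level_gen n p b i) = cyc_diff n (\<lambda>l. int p ^ e * G l)"
    using cyc_diff_pow_diff_level_gen[OF n_pos, of i p b] unfolding e_def G_def by simp
  also have "\<dots> = (\<lambda>l. int p ^ e * cyc_diff n G l)"
    unfolding cyc_diff_def by (simp add: right_diff_distrib)
  finally have D_gen: "(cyc_diff n ^^ Suc (i mod n)) (diff_level_gen n p b i)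
      = (\<lambda>l. int p ^ e * cyc_diff n G l)" .
  have "\<forall>l<n. int p ^ Suc e dvd int p ^ e * cyc_diff n G l"
  proof (intro allI impI)
    fix l assume "l < n"
    then have "int p dvd cyc_diff n G l"
      using prime_dvd_cyc_diff_pow_delta0[OF prime a_pos n_def] unfolding G_def by blast
    then show "int p ^ Suc e dvd int p ^ e * cyc_diff n G l"
      by (simp add: power_Suc2)
  qed
  moreover have "\<forall>l<n. int p ^ e dvd diff_level_gen n p b i l"
    unfolding diff_level_gen_def e_def by simp
  ultimately show ?thesis
    unfolding diff_level_Suc_iff[OF assms] D_gen be by simp
qed

lemma diff_level_Suc_decomp:
  assumes "i < b * n" and u: "diff_level n p b (Suc i) u"
  shows "\<exists>c. diff_level n p b i (\<lambda>l. u l - c * diff_level_gen n p b i l)"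
proof -
  define e where "e = b - i div n - 1"
  define w where "w = (cyc_diff n ^^ (i mod n)) u"
  define G where "G = (cyc_diff n ^^ (n - 1)) delta0"
  have be: "b - i div n = Suc e"
    using Suc_diff_div_pred[OF assms(1)] unfolding e_def .
  have u_dvd: "\<forall>l<n. int p ^ e dvd u l" and Dw: "\<forall>l<n. int p ^ Suc e dvd cyc_diff n w l"
    using u diff_level_Suc_iff[OF assms(1)] unfolding w_def e_def[symmetric] be by auto
  have "\<forall>l<n. int p ^ e dvd w l" using cyc_diff_pow_dvd[OF u_dvd] unfolding w_def by blast
  then obtain c where c: "\<forall>l<n. int p ^ Suc e dvd w l - c * (int p ^ e * G l)"
    using cyc_diff_kernel_mod_prime_power[OF prime a_pos n_def _ Dw] unfolding G_def by blast
  have "(cyc_diff n ^^ (i mod n)) (\<lambda>l. u l - c * diff_level_gen n p b i l)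
      = (\<lambda>l. w l - c * (int p ^ e * G l))"
    unfolding cyc_diff_pow_diff_smult cyc_diff_pow_diff_level_gen[OF n_pos] w_def G_def e_def ..
  moreover have "\<forall>l<n. int p ^ e dvd u l - c * diff_level_gen n p b i l"
    using u_dvd unfolding diff_level_gen_def e_def[symmetric] by (simp add: dvd_diff)
  ultimately have "diff_level n p b i (\<lambda>l. u l - c * diff_level_gen n p b i l)"
    using c unfolding diff_level_def e_def[symmetric] be by simp
  then show ?thesis ..
qed

sublocale cyclic_filtration n p "b * n" "diff_level n p b" "diff_level_gen n p b"
proof
  show "0 < p" using prime prime_gt_0_nat by blast
qed (use n_pos in \<open>auto intro: diff_level_add diff_level_smult diff_level_Suc
      diff_level_rotate_diff diff_level_Suc_decomp diff_level_gen_mem diff_level_p_gen\<close>)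

end

definition reduce_mod :: "nat \<Rightarrow> nat \<Rightarrow> (nat \<Rightarrow> int) \<Rightarrow> nat \<Rightarrow> nat" where
  "reduce_mod n m u = (\<lambda>l. if l < n then nat (u l mod int m) else 0)"

lemma valid_config_reduce_mod: "0 < m \<Longrightarrow> valid_config n m (reduce_mod n m u)"
  unfolding valid_config_def reduce_mod_def by (auto simp: nat_less_iff)

lemma reduce_mod_of_valid_config:
  "valid_config n m x \<Longrightarrow> reduce_mod n m (\<lambda>l. int (x l)) = x"
  unfolding valid_config_def reduce_mod_def by (auto simp: fun_eq_iff)

lemma reduce_mod_eq_zero: "\<forall>l<n. int m dvd u l \<Longrightarrow> reduce_mod n m u = (\<lambda>_. 0)"
  unfolding reduce_mod_def by (auto simp: fun_eq_iff)

lemma add_move_reduce_mod: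
  assumes "0 < m"
  shows "add_move n m (reduce_mod n m u) (reduce_mod n m w) = reduce_mod n m (\<lambda>l. u l + w l)"
proof -
  have "(nat (x mod int m) + nat (y mod int m)) mod m = nat ((x + y) mod int m)" for x y :: int
  proof -
    have "(nat (x mod int m) + nat (y mod int m)) mod m = nat ((x mod int m + y mod int m) mod int m)"
      using assms by (simp add: nat_add_distrib nat_mod_distrib)
    then show ?thesis by (simp add: mod_add_eq)
  qed
  then show ?thesis by (simp add: add_move_def reduce_mod_def fun_eq_iff)
qed

lemma rotate_config_reduce_mod:
  "0 < n \<Longrightarrow> rotate_config n k (reduce_mod n m u) = reduce_mod n m (rotate_int n k u)"
  unfolding rotate_config_def reduce_mod_def rotate_int_def by auto

lemma game_state_reduce_mod:
  assumes "0 < n" and "0 < m"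
  shows "t \<le> length ws \<Longrightarrow>
    game_state n m (map (reduce_mod n m) ws) ks (reduce_mod n m u) t
      = reduce_mod n m (int_game_state n ws ks u t)"
  by (induction t) (simp_all add: add_move_reduce_mod rotate_config_reduce_mod assms)

lemma winning_reduce_mod:
  assumes "0 < n" and "0 < m"
    and wins: "\<forall>u ks. (\<forall>t::nat. ks t < n) \<longrightarrow>
       (\<exists>t\<le>length ws. \<forall>l<n. int m dvd int_game_state n ws ks u t l)"
  shows "winning n m (map (reduce_mod n m) ws)"
  unfolding winning_def
proof (intro conjI allI impI)
  show "\<forall>y\<in>set (map (reduce_mod n m) ws). valid_config n m y"
    using valid_config_reduce_mod[OF \<open>0 < m\<close>] by auto
  fix x and ks :: "nat \<Rightarrow> nat" assume x: "valid_config n m x" and ks: "\<forall>t. ks t < n"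
  obtain t where "t \<le> length ws" and "\<forall>l<n. int m dvd int_game_state n ws ks (\<lambda>l. int (x l)) t l"
    using wins ks by blast
  then show "\<exists>t\<le>length (map (reduce_mod n m) ws). game_state n m (map (reduce_mod n m) ws) ks x t = (\<lambda>_. 0)"
    using game_state_reduce_mod[OF assms(1,2), of t ws ks "\<lambda>l. int (x l)"]
    by (auto simp: reduce_mod_of_valid_config[OF x] reduce_mod_eq_zero)
qed

theorem mainTheorem8:
  fixes p a b :: nat
  assumes "prime p" and "0 < a" and "0 < b"
  shows "\<exists>ys. length ys = p ^ (b * p ^ a) - 1 \<and> winning (p ^ a) (p ^ b) ys"
proof -
  interpret prime_power_table p a b "p ^ a"
    using assms by unfold_locales simp_all
  have "wins_from (b * p ^ a) (strategy (b * p ^ a))"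
    using strategy_wins by blast
  then have "\<forall>u ks. (\<forall>t. ks t < p ^ a) \<longrightarrow> (\<exists>t\<le>length (strategy (b * p ^ a)).
      \<forall>l<p ^ a. int (p ^ b) dvd int_game_state (p ^ a) (strategy (b * p ^ a)) ks u t l)"
    using diff_level_top[OF n_pos] unfolding wins_from_def diff_level_0_iff by simp
  then have "winning (p ^ a) (p ^ b) (map (reduce_mod (p ^ a) (p ^ b)) (strategy (b * p ^ a)))"
    using n_pos p_pos by (intro winning_reduce_mod) simp_all
  then show ?thesis by (intro exI[of _ "map _ (strategy (b * p ^ a))"]) (simp add: length_strategy)
qed

end
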